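(* Let $X$ be a finite set, $k$ an integer with $1\le k\le|X|-1$, $\mathfrak{C}$ a family of choice functions for $\binom{X}{k}$ and $\mathcal{F}$ the set of (not necessarily simple) averaging functions for $\mathfrak{C}$. Assume $r=r(\mathcal{F})$ satisfies $4\le r<\infty$. Then (1) for every $f\in\mathcal{F}_{[r]}$ there is $\ell(f)\in\{1,\dots,r\}$ such that for every $Y\in\binom{X}{k}$ and every $\bar a\in Y^r$ which is not one-to-one, $f_Y(\bar a)=a_{\ell(f)}$; and (2) $r\le k$.
   Context: $\binom{X}{k}=\{Y\subseteq X:|Y|=k\}$; choice functions satisfy $c(Y)\in Y$. $\mathcal{F}_{[r]}$ is the set of families $f=\langle f_Y:Y\in\binom{X}{k}\rangle$ with $f_Y:Y^r\to Y$, $f_Y(x_1,\dots,x_r)\in\{x_1,\dots,x_r\}$, such that for all $c_1,\dots,c_r\in\mathfrak{C}$, $Y\mapsto f_Y(c_1(Y),\dots,c_r(Y))$ is in $\mathfrak{C}$; $\mathcal{F}=\bigcup_r\mathcal{F}_{[r]}$. $f\in\mathcal{F}_{[r]}$ is a monarchy if for some $t$, $f_Y(\bar x)=x_t$ for all $Y$ and $\bar x\in Y^r$. $r(\mathcal{F})=\min\{r\ge2:\text{some } f\in\mathcal{F}_{[r]}\text{ is not a monarchy}\}$. Standing assumption: every simple $f\in\mathcal{F}$ (with $f_Y$ the restriction of a single function independent of $Y$) is a monarchy. *)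

theory Defs
  imports "HOL-Library.FuncSet"
begin

definition ksubsets :: "'a set \<Rightarrow> nat \<Rightarrow> 'a set set" where
  "ksubsets X k = {Y. Y \<subseteq> X \<and> card Y = k}"

definition choice_fun :: "'a set \<Rightarrow> nat \<Rightarrow> ('a set \<Rightarrow> 'a) \<Rightarrow> bool" where
  "choice_fun X k c \<longleftrightarrow> (\<forall>Y\<in>ksubsets X k. c Y \<in> Y) \<and> c \<in> extensional (ksubsets X k)"

definition tuples :: "'a set \<Rightarrow> nat \<Rightarrow> 'a list set" where
  "tuples Y r = {xs. length xs = r \<and> set xs \<subseteq> Y}"

definition compose_fam :: "'a set \<Rightarrow> nat \<Rightarrow> ('a set \<Rightarrow> 'a list \<Rightarrow> 'a) \<Rightarrow> ('a set \<Rightarrow> 'a) list \<Rightarrow> 'a set \<Rightarrow> 'a" where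
  "compose_fam X k f cs = (\<lambda>Y. if Y \<in> ksubsets X k then f Y (map (\<lambda>c. c Y) cs) else undefined)"

definition avg :: "'a set \<Rightarrow> nat \<Rightarrow> ('a set \<Rightarrow> 'a) set \<Rightarrow> nat \<Rightarrow> ('a set \<Rightarrow> 'a list \<Rightarrow> 'a) set" where
  "avg X k CC r = {f.
     (\<forall>Y\<in>ksubsets X k. \<forall>xs\<in>tuples Y r. f Y xs \<in> set xs) \<and>
     (\<forall>cs. length cs = r \<and> set cs \<subseteq> CC \<longrightarrow> compose_fam X k f cs \<in> CC)}"

definition monarchy :: "'a set \<Rightarrow> nat \<Rightarrow> nat \<Rightarrow> ('a set \<Rightarrow> 'a list \<Rightarrow> 'a) \<Rightarrow> bool" where
  "monarchy X k r f \<longleftrightarrow> (\<exists>t<r. \<forall>Y\<in>ksubsets X k. \<forall>xs\<in>tuples Y r. f Y xs = xs ! t)"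

definition simple :: "'a set \<Rightarrow> nat \<Rightarrow> nat \<Rightarrow> ('a set \<Rightarrow> 'a list \<Rightarrow> 'a) \<Rightarrow> bool" where
  "simple X k r f \<longleftrightarrow> (\<exists>g. \<forall>Y\<in>ksubsets X k. \<forall>xs\<in>tuples Y r. f Y xs = g xs)"

definition rF :: "'a set \<Rightarrow> nat \<Rightarrow> ('a set \<Rightarrow> 'a) set \<Rightarrow> nat" where
  "rF X k CC = (LEAST r. 2 \<le> r \<and> (\<exists>f\<in>avg X k CC r. \<not> monarchy X k r f))"

end

theory Submission
  imports Defs
begin

text \<open>
  By minimality of \<open>r\<close>, every \<open>(r-1)\<close>-ary averaging function is a monarchy. Identifying the
  coordinates \<open>i\<close> and \<open>j\<close> of an \<open>r\<close>-ary averaging function \<open>f\<close> yields an \<open>(r-1)\<close>-ary averaging function, so on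
  tuples with \<open>a\<^sub>i = a\<^sub>j\<close> the function \<open>f\<close> is the projection to some coordinate \<open>M i j\<close>.
  Evaluating \<open>f\<close> on tuples with two values shows that \<open>M\<close> is compatible with every
  2-colouring of the coordinates, and for \<open>r \<ge> 4\<close> this forces one coordinate \<open>l\<close> serving all
  pairs. Finally, if \<open>r > k\<close> then no \<open>r\<close>-tuple from a \<open>k\<close>-set is one-to-one, so every
  \<open>r\<close>-ary averaging function would be a monarchy, contrary to the choice of \<open>r\<close>.
\<close>

lemma rF_non_monarchy:
  assumes "\<exists>r'. 2 \<le> r' \<and> (\<exists>f\<in>avg X k CC r'. \<not> monarchy X k r' f)"
  shows "2 \<le> rF X k CC \<and> (\<exists>f\<in>avg X k CC (rF X k CC). \<not> monarchy X k (rF X k CC) f)"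
  using LeastI_ex[OF assms] unfolding rF_def .

lemma monarchy_below_rF:
  assumes "2 \<le> r'" "r' < rF X k CC" "f \<in> avg X k CC r'"
  shows "monarchy X k r' f"
  using not_less_Least[of r'] assms unfolding rF_def by blast

lemma avg_reindex:
  assumes f: "f \<in> avg X k CC n" and \<sigma>: "\<forall>p<n. \<sigma> p < m"
  shows "(\<lambda>Y ys. f Y (map (\<lambda>p. ys ! \<sigma> p) [0..<n])) \<in> avg X k CC m"
    (is "?g \<in> _")
proof -
  have reindex_set: "set (map (\<lambda>p. ys ! \<sigma> p) [0..<n]) \<subseteq> set ys" if "length ys = m" for ys :: "'b list"
    using that \<sigma> by auto
  show ?thesis
    unfolding avg_def
  proof (intro CollectI conjI ballI allI impI)
    fix Y ys assume Y: "Y \<in> ksubsets X k" and ys: "ys \<in> tuples Y m"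
    have "map (\<lambda>p. ys ! \<sigma> p) [0..<n] \<in> tuples Y n"
      using ys reindex_set unfolding tuples_def by auto
    then have "?g Y ys \<in> set (map (\<lambda>p. ys ! \<sigma> p) [0..<n])"
      using f Y unfolding avg_def by blast
    also have "\<dots> \<subseteq> set ys"
      using reindex_set ys unfolding tuples_def by blast
    finally show "?g Y ys \<in> set ys" .
  next
    fix cs :: "('a set \<Rightarrow> 'a) list" assume cs: "length cs = m \<and> set cs \<subseteq> CC"
    define cs' where "cs' = map (\<lambda>p. cs ! \<sigma> p) [0..<n]"
    have "length cs' = n \<and> set cs' \<subseteq> CC"
      using cs reindex_set[of cs] unfolding cs'_def by auto
    then have "compose_fam X k f cs' \<in> CC"
      using f unfolding avg_def by blast
    moreover have "compose_fam X k ?g cs = compose_fam X k f cs'"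
    proof -
      have "map (\<lambda>c. c Y) cs' = map (\<lambda>p. map (\<lambda>c. c Y) cs ! \<sigma> p) [0..<n]" for Y
        using cs \<sigma> unfolding cs'_def by auto
      then show ?thesis unfolding compose_fam_def by (intro ext) simp
    qed
    ultimately show "compose_fam X k ?g cs \<in> CC" by simp
  qed
qed

lemma avg_projection_on_diagonal:
  assumes f: "f \<in> avg X k CC r"
    and mon: "\<forall>g\<in>avg X k CC (r - 1). monarchy X k (r - 1) g"
    and ij: "i < r" "j < r" "i \<noteq> j"
  shows "\<exists>m<r. \<forall>Y\<in>ksubsets X k. \<forall>xs\<in>tuples Y r. xs ! i = xs ! j \<longrightarrow> f Y xs = xs ! m"
proof -
  define del where "del p = (if p < j then p else p - 1)" for p :: nat
  define ins where "ins q = (if q < j then q else Suc q)" for q :: nat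
  define \<sigma> where "\<sigma> p = del (if p = j then i else p)" for p
  have \<sigma>_lt: "\<forall>p<r. \<sigma> p < r - 1" using ij unfolding \<sigma>_def del_def by auto
  have ins_lt: "ins q < r" if "q < r - 1" for q using that ij unfolding ins_def by auto
  have ins_\<sigma>: "ins (\<sigma> p) = (if p = j then i else p)" for p
    using ij unfolding ins_def \<sigma>_def del_def by auto
  define g where "g = (\<lambda>Y ys. f Y (map (\<lambda>p. ys ! \<sigma> p) [0..<r]))"
  have "g \<in> avg X k CC (r - 1)"
    unfolding g_def using avg_reindex[OF f \<sigma>_lt] .
  then obtain t where t: "t < r - 1"
    and g_t: "\<forall>Y\<in>ksubsets X k. \<forall>ys\<in>tuples Y (r - 1). g Y ys = ys ! t"
    using mon unfolding monarchy_def by blast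
  show ?thesis
  proof (intro exI[of _ "ins t"] conjI ballI impI)
    show "ins t < r" using ins_lt t .
    fix Y xs assume Y: "Y \<in> ksubsets X k" and xs: "xs \<in> tuples Y r" and eq: "xs ! i = xs ! j"
    define ys where "ys = map (\<lambda>q. xs ! ins q) [0..<r - 1]"
    have ys: "ys \<in> tuples Y (r - 1)"
      using xs ins_lt unfolding ys_def tuples_def by (auto simp: subset_iff)
    have "map (\<lambda>p. ys ! \<sigma> p) [0..<r] = xs"
      using xs \<sigma>_lt eq unfolding ys_def tuples_def by (intro nth_equalityI) (auto simp: ins_\<sigma>)
    then have "f Y xs = g Y ys" unfolding g_def by simp
    also have "\<dots> = ys ! t" using g_t Y ys by blast
    also have "\<dots> = xs ! ins t" unfolding ys_def using t by simp
    finally show "f Y xs = xs ! ins t" .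
  qed
qed

definition colouring_coherent :: "nat \<Rightarrow> (nat \<Rightarrow> nat \<Rightarrow> nat) \<Rightarrow> bool" where
  "colouring_coherent r M \<longleftrightarrow>
     (\<forall>i<r. \<forall>j<r. \<forall>p<r. \<forall>q<r. \<forall>S. i \<noteq> j \<longrightarrow> p \<noteq> q \<longrightarrow>
        (i \<in> S \<longleftrightarrow> j \<in> S) \<longrightarrow> (p \<in> S \<longleftrightarrow> q \<in> S) \<longrightarrow> (M i j \<in> S \<longleftrightarrow> M p q \<in> S))"

lemma colouring_coherentD:
  assumes "colouring_coherent r M" "i < r" "j < r" "i \<noteq> j" "p < r" "q < r" "p \<noteq> q"
    "i \<in> S \<longleftrightarrow> j \<in> S" "p \<in> S \<longleftrightarrow> q \<in> S"
  shows "M i j \<in> S \<longleftrightarrow> M p q \<in> S"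
  using assms unfolding colouring_coherent_def by blast

text \<open>The tuple taking the value \<open>b\<close> on \<open>S\<close> and \<open>a\<close> elsewhere is returned at both \<open>M i j\<close> and \<open>M p q\<close>.\<close>

lemma pair_projections_colouring_coherent:
  assumes ab: "a \<in> Y" "b \<in> Y" "a \<noteq> b"
    and M: "\<And>i j. i < r \<Longrightarrow> j < r \<Longrightarrow> i \<noteq> j \<Longrightarrow>
      M i j < r \<and> (\<forall>xs\<in>tuples Y r. xs ! i = xs ! j \<longrightarrow> F xs = xs ! M i j)"
  shows "colouring_coherent r M"
  unfolding colouring_coherent_def
proof (intro allI impI)
  fix i j p q S
  assume ij: "i < r" "j < r" "i \<noteq> j" and pq: "p < r" "q < r" "p \<noteq> q"
    and ij_S: "i \<in> S \<longleftrightarrow> j \<in> S" and pq_S: "p \<in> S \<longleftrightarrow> q \<in> S"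
  define xs where "xs = map (\<lambda>n. if n \<in> S then b else a) [0..<r]"
  have xs: "xs \<in> tuples Y r" using ab unfolding xs_def tuples_def by auto
  have "xs ! M i j = F xs" using M[OF ij] xs ij ij_S unfolding xs_def by auto
  also have "\<dots> = xs ! M p q" using M[OF pq] xs pq pq_S unfolding xs_def by auto
  finally show "M i j \<in> S \<longleftrightarrow> M p q \<in> S"
    using M[OF ij] M[OF pq] ab(3) unfolding xs_def by (auto split: if_splits)
qed

lemma two_indices_below_4_avoiding:
  "\<exists>u<4. \<exists>v<4. u \<noteq> v \<and> u \<notin> {l, t} \<and> v \<notin> {l, t::nat}"
  by auto presburger

lemma colouring_coherent_common_index:
  assumes r4: "4 \<le> r"
    and M_lt: "\<And>i j. i < r \<Longrightarrow> j < r \<Longrightarrow> i \<noteq> j \<Longrightarrow> M i j < r"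
    and coherent: "colouring_coherent r M"
  shows "\<exists>l<r. \<forall>i<r. \<forall>j<r. i \<noteq> j \<longrightarrow> M i j = l \<or> M i j \<in> {i, j} \<and> l \<in> {i, j}"
proof -
  have agree: "M p q = M i j"
    if "i < r" "j < r" "i \<noteq> j" "p < r" "q < r" "p \<noteq> q" "M i j \<notin> {i, j, p, q}" for i j p q
    using colouring_coherentD[OF coherent that(1-6), of "{M i j}"] that(7) by auto
  have "\<exists>i<r. \<exists>j<r. i \<noteq> j \<and> M i j \<notin> {i, j}"
  proof (rule ccontr)
    assume "\<not> ?thesis"
    then have "M i j \<in> {i, j}" if "i < r" "j < r" "i \<noteq> j" for i j
      using that by blast
    then have "M 0 1 \<in> {0, 1}" "M 2 3 \<in> {2, 3}" using r4 by auto
    moreover have "M 0 1 \<in> {0, 1} \<longleftrightarrow> M 2 3 \<in> {0, 1::nat}"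
      using colouring_coherentD[OF coherent, of 0 1 2 3 "{0, 1}"] r4 by auto
    ultimately show False by auto
  qed
  then obtain i j where ij: "i < r" "j < r" "i \<noteq> j" and Mij_out: "M i j \<notin> {i, j}" by blast
  show ?thesis
  proof (intro exI[of _ "M i j"] conjI allI impI)
    show "M i j < r" using M_lt ij .
    fix p q assume pq: "p < r" "q < r" "p \<noteq> q"
    show "M p q = M i j \<or> M p q \<in> {p, q} \<and> M i j \<in> {p, q}"
    proof (rule ccontr)
      assume "\<not> ?thesis"
      then have Mij_in: "M i j \<in> {p, q}" and Mpq_out: "M p q \<notin> {p, q}"
        using agree[OF ij pq] Mij_out by auto
      obtain u v where uv: "u < 4" "v < 4" "u \<noteq> v" "u \<notin> {M i j, M p q}" "v \<notin> {M i j, M p q}"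
        using two_indices_below_4_avoiding by blast
      then have "u < r" "v < r" using r4 by auto
      then have "M u v = M i j" "M u v = M p q"
        using agree[OF ij, of u v] agree[OF pq, of u v] Mij_out Mpq_out uv by auto
      then show False using Mij_in Mpq_out by auto
    qed
  qed
qed

lemma avg_projection_on_non_distinct:
  assumes r4: "4 \<le> r"
    and mon: "\<forall>g\<in>avg X k CC (r - 1). monarchy X k (r - 1) g"
    and f: "f \<in> avg X k CC r"
  shows "\<exists>l<r. \<forall>Y\<in>ksubsets X k. \<forall>xs\<in>tuples Y r. \<not> distinct xs \<longrightarrow> f Y xs = xs ! l"
proof (cases "\<exists>Y\<in>ksubsets X k. \<exists>a\<in>Y. \<exists>b\<in>Y. a \<noteq> b")
  case True
  then obtain Y a b where Y: "Y \<in> ksubsets X k" and ab: "a \<in> Y" "b \<in> Y" "a \<noteq> b" by blast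
  define M where "M i j = (SOME m. m < r \<and>
      (\<forall>Y\<in>ksubsets X k. \<forall>xs\<in>tuples Y r. xs ! i = xs ! j \<longrightarrow> f Y xs = xs ! m))" for i j
  have M: "M i j < r \<and>
      (\<forall>Y\<in>ksubsets X k. \<forall>xs\<in>tuples Y r. xs ! i = xs ! j \<longrightarrow> f Y xs = xs ! M i j)"
    if "i < r" "j < r" "i \<noteq> j" for i j
    unfolding M_def using someI_ex[OF avg_projection_on_diagonal[OF f mon that]] .
  have coherent: "colouring_coherent r M"
  proof (rule pair_projections_colouring_coherent[OF ab])
    fix i j assume "i < r" "j < r" "i \<noteq> j"
    then show "M i j < r \<and> (\<forall>xs\<in>tuples Y r. xs ! i = xs ! j \<longrightarrow> f Y xs = xs ! M i j)"
      using M Y by blast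
  qed
  obtain l where l: "l < r"
    and common: "\<forall>i<r. \<forall>j<r. i \<noteq> j \<longrightarrow> M i j = l \<or> M i j \<in> {i, j} \<and> l \<in> {i, j}"
    using colouring_coherent_common_index[OF r4 conjunct1[OF M] coherent] by blast
  show ?thesis
  proof (intro exI[of _ l] conjI ballI impI l)
    fix Z xs assume Z: "Z \<in> ksubsets X k" and xs: "xs \<in> tuples Z r" and "\<not> distinct xs"
    then obtain i j where ij: "i < r" "j < r" "i \<noteq> j" and eq: "xs ! i = xs ! j"
      unfolding distinct_conv_nth tuples_def by auto
    have "f Z xs = xs ! M i j" using M[OF ij] Z xs eq by blast
    also have "\<dots> = xs ! l" using common[rule_format, OF ij] eq by auto
    finally show "f Z xs = xs ! l" .
  qed
next
  case False
  show ?thesis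
  proof (intro exI[of _ 0] conjI ballI impI)
    show "0 < r" using r4 by simp
    fix Z xs assume Z: "Z \<in> ksubsets X k" and xs: "xs \<in> tuples Z r"
    have "f Z xs \<in> set xs" using f Z xs unfolding avg_def by blast
    moreover have "xs ! 0 \<in> set xs" using xs r4 unfolding tuples_def by auto
    ultimately show "f Z xs = xs ! 0" using False Z xs unfolding tuples_def by blast
  qed
qed

lemma tuples_not_distinct:
  assumes "finite Y" "card Y < r" "xs \<in> tuples Y r"
  shows "\<not> distinct xs"
  using assms card_mono[of Y "set xs"] distinct_card[of xs] unfolding tuples_def by auto

theorem claim16p2:
  fixes X :: "'a set" and k r :: nat and CC :: "('a set \<Rightarrow> 'a) set"
  assumes "finite X"
    and "1 \<le> k" and "k \<le> card X - 1"
    and "\<forall>c\<in>CC. choice_fun X k c"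
    and "\<forall>r' f. f \<in> avg X k CC r' \<and> simple X k r' f \<longrightarrow> monarchy X k r' f"
    and "\<exists>r'. 2 \<le> r' \<and> (\<exists>f\<in>avg X k CC r'. \<not> monarchy X k r' f)"
    and "r = rF X k CC"
    and "4 \<le> r"
  shows "(\<forall>f\<in>avg X k CC r. \<exists>l<r. \<forall>Y\<in>ksubsets X k. \<forall>xs\<in>tuples Y r.
            \<not> distinct xs \<longrightarrow> f Y xs = xs ! l) \<and> r \<le> k"
proof -
  have "\<forall>g\<in>avg X k CC (r - 1). monarchy X k (r - 1) g"
    using assms(7,8) by (intro ballI monarchy_below_rF) auto
  then have projection: "\<forall>f\<in>avg X k CC r. \<exists>l<r. \<forall>Y\<in>ksubsets X k. \<forall>xs\<in>tuples Y r.
      \<not> distinct xs \<longrightarrow> f Y xs = xs ! l"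
    using avg_projection_on_non_distinct assms(8) by blast
  have "r \<le> k"
  proof (rule ccontr)
    assume "\<not> r \<le> k"
    obtain f where "f \<in> avg X k CC r" and "\<not> monarchy X k r f"
      using rF_non_monarchy[OF assms(6)] assms(7) by blast
    moreover have "\<not> distinct xs" if "Y \<in> ksubsets X k" "xs \<in> tuples Y r" for Y xs
      using that \<open>\<not> r \<le> k\<close> assms(1) finite_subset
      by (intro tuples_not_distinct[of Y]) (auto simp: ksubsets_def)
    ultimately show False
      using projection unfolding monarchy_def by blast
  qed
  with projection show ?thesis by blast
qed

end
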